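(* Let $Y\subset\mathbb C^n$ be a $k$-dimensional subspace and $a\in(\mathbb C^\times)^n$. Assume that for every $j\in\{1,\dots,n\}$, $Y$ is not contained in the hyperplane $\{q_j=0\}$ and $Y^\perp$ is not contained in the hyperplane $\{p_j=0\}$. Then $L_{Y,a}$ is an irreducible smooth $n$-dimensional Lagrangian subvariety of $\mathbb C^n\times\{p\in(\mathbb C^n)^*:\prod_{j=1}^np_j\ne0\}$, defined by the equations $$F_\alpha:=\sum_{j=1}^n\alpha_jp_j=0\ \ (\alpha\in Y),\qquad G_{\beta,a}:=\sum_{j=1}^n\beta_j(q_j-a_j/p_j)=0\ \ (\beta\in Y^\perp),$$ and the set of all functions $\{F_\alpha,G_{\beta,a}\}$ is in involution.
   Context: $\mathbb C^n$ has coordinates $q_1,\dots,q_n$, the dual space $(\mathbb C^n)^*$ has dual coordinates $p_1,\dots,p_n$, and $\mathbb C^n\times(\mathbb C^n)^*$ carries the symplectic form $\sum_jdp_j\wedge dq_j$. Two functions $M,N$ are in involution if $\sum_j(\partial M/\partial q_j\,\partial N/\partial p_j-\partial M/\partial p_j\,\partial N/\partial q_j)=0$. $Y^\perp\subset(\mathbb C^n)^*$ is the annihilator of $Y$. The rational symplectic map $r_a(q_1,\dots,q_n,p_1,\dots,p_n)=(q_1+a_1/p_1,\dots,q_n+a_n/p_n,p_1,\dots,p_n)$ is defined where all $p_j\ne0$, and $L_{Y,a}=r_a(Y\times Y^\perp)$ is the image under $r_a$ of the points of $Y\times Y^\perp$ with all $p_j\ne0$. *)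

theory Defs
  imports "HOL-Analysis.Analysis"
begin

text \<open>Phase space: points (q,p) with q in C^n and p in (C^n)^*, the dual space being
identified with C^n via the pairing  p(q) = sum_j p_j q_j.  The dimension n is CARD('n).\<close>

type_synonym 'n phase = "(complex ^ 'n) \<times> (complex ^ 'n)"

definition annih :: "(complex ^ 'n::finite) set \<Rightarrow> (complex ^ 'n) set" where
  "annih Y = {p. \<forall>y\<in>Y. (\<Sum>j\<in>UNIV. p $ j * y $ j) = 0}"

definition torusU :: "'n::finite phase set" where
  "torusU = {x. \<forall>j. snd x $ j \<noteq> 0}"

definition r_map :: "complex ^ 'n::finite \<Rightarrow> 'n phase \<Rightarrow> 'n phase" where
  "r_map a x = ((\<chi> j. fst x $ j + a $ j / snd x $ j), snd x)"

definition L_Ya :: "(complex ^ 'n) set \<Rightarrow> complex ^ 'n \<Rightarrow> 'n::finite phase set" where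
  "L_Ya Y a = r_map a ` {x. fst x \<in> Y \<and> snd x \<in> annih Y \<and> (\<forall>j. snd x $ j \<noteq> 0)}"

definition F_fun :: "complex ^ 'n \<Rightarrow> 'n::finite phase \<Rightarrow> complex" where
  "F_fun \<alpha> x = (\<Sum>j\<in>UNIV. \<alpha> $ j * snd x $ j)"

definition G_fun :: "complex ^ 'n \<Rightarrow> complex ^ 'n \<Rightarrow> 'n::finite phase \<Rightarrow> complex" where
  "G_fun a \<beta> x = (\<Sum>j\<in>UNIV. \<beta> $ j * (fst x $ j - a $ j / snd x $ j))"

definition dq :: "('n::finite phase \<Rightarrow> complex) \<Rightarrow> 'n \<Rightarrow> 'n phase \<Rightarrow> complex" where
  "dq M j x = deriv (\<lambda>t. M ((\<chi> i. if i = j then t else fst x $ i), snd x)) (fst x $ j)"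

definition dp :: "('n::finite phase \<Rightarrow> complex) \<Rightarrow> 'n \<Rightarrow> 'n phase \<Rightarrow> complex" where
  "dp M j x = deriv (\<lambda>t. M (fst x, (\<chi> i. if i = j then t else snd x $ i))) (snd x $ j)"

definition poisson :: "('n::finite phase \<Rightarrow> complex) \<Rightarrow> ('n phase \<Rightarrow> complex) \<Rightarrow> 'n phase \<Rightarrow> complex" where
  "poisson M N x = (\<Sum>j\<in>UNIV. dq M j x * dp N j x - dp M j x * dq N j x)"

definition in_involution :: "('n::finite phase \<Rightarrow> complex) set \<Rightarrow> 'n phase set \<Rightarrow> bool" where
  "in_involution S U \<longleftrightarrow> (\<forall>M\<in>S. \<forall>N\<in>S. \<forall>x\<in>U. poisson M N x = 0)"

inductive_set polyfun :: "('n::finite phase \<Rightarrow> complex) set" where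
  const: "(\<lambda>x. c) \<in> polyfun"
| qcoord: "(\<lambda>x. fst x $ j) \<in> polyfun"
| pcoord: "(\<lambda>x. snd x $ j) \<in> polyfun"
| add: "f \<in> polyfun \<Longrightarrow> g \<in> polyfun \<Longrightarrow> (\<lambda>x. f x + g x) \<in> polyfun"
| mult: "f \<in> polyfun \<Longrightarrow> g \<in> polyfun \<Longrightarrow> (\<lambda>x. f x * g x) \<in> polyfun"

definition closed_in_U :: "'n::finite phase set \<Rightarrow> bool" where
  "closed_in_U V \<longleftrightarrow> (\<exists>S \<subseteq> polyfun. V = {x \<in> torusU. \<forall>f\<in>S. f x = 0})"

definition irreducible_in_U :: "'n::finite phase set \<Rightarrow> bool" where
  "irreducible_in_U V \<longleftrightarrow> closed_in_U V \<and> V \<noteq> {} \<and>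
     (\<forall>V1 V2. closed_in_U V1 \<and> closed_in_U V2 \<and> V = V1 \<union> V2 \<longrightarrow> V1 = V \<or> V2 = V)"

definition dirderiv :: "('n::finite phase \<Rightarrow> complex) \<Rightarrow> 'n phase \<Rightarrow> 'n phase \<Rightarrow> complex" where
  "dirderiv f x v = deriv (\<lambda>t::complex. f (fst x + t *s fst v, snd x + t *s snd v)) 0"

definition tangent_space :: "'n::finite phase set \<Rightarrow> 'n phase \<Rightarrow> 'n phase set" where
  "tangent_space V x = {v. \<forall>f\<in>polyfun. (\<forall>y\<in>V. f y = 0) \<longrightarrow> dirderiv f x v = 0}"

definition pscale :: "complex \<Rightarrow> 'n::finite phase \<Rightarrow> 'n phase" where
  "pscale c v = (c *s fst v, c *s snd v)"

definition pdim :: "'n::finite phase set \<Rightarrow> nat" where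
  "pdim T = vector_space.dim pscale T"

definition omega :: "'n::finite phase \<Rightarrow> 'n phase \<Rightarrow> complex" where
  "omega v w = (\<Sum>j\<in>UNIV. snd v $ j * fst w $ j - snd w $ j * fst v $ j)"

text \<open>V is an irreducible smooth n-dimensional Lagrangian subvariety of U:
 irreducible Zariski-closed in U, and at every point the Zariski tangent space has
 dimension n = CARD('n) (smoothness of dimension n) and is isotropic for omega.\<close>
definition smooth_lagrangian_subvariety :: "'n::finite phase set \<Rightarrow> bool" where
  "smooth_lagrangian_subvariety V \<longleftrightarrow> irreducible_in_U V \<and>
     (\<forall>x\<in>V. pdim (tangent_space V x) = CARD('n) \<and>
        (\<forall>v\<in>tangent_space V x. \<forall>w\<in>tangent_space V x. omega v w = 0))"

end

theory Submission
  imports Defs "HOL-Complex_Analysis.Conformal_Mappings"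
begin

text \<open>The map \<open>r\<^sub>a\<close> is a bijection from the points \<open>(q, p)\<close> of \<open>Y \<times> Y\<^sup>\<perp>\<close> with all \<open>p\<^sub>j \<noteq> 0\<close>
  onto \<open>L\<^bsub>Y,a\<^esub>\<close>, with inverse \<open>(q, p) \<mapsto> (q - a/p, p)\<close>; since \<open>Y\<^sup>\<perp>\<^sup>\<perp> = Y\<close>, this yields the
  equations \<open>F\<^sub>\<alpha> = G\<^bsub>\<beta>,a\<^esub> = 0\<close>, and clearing the denominators of \<open>G\<^bsub>\<beta>,a\<^esub>\<close> shows that
  \<open>L\<^bsub>Y,a\<^esub>\<close> is Zariski closed. Involutivity is immediate: \<open>{F\<^sub>\<alpha>, G\<^bsub>\<beta>,a\<^esub>} = \<langle>\<alpha>, \<beta>\<rangle> = 0\<close>,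
  and the other brackets vanish termwise.

  Irreducibility: two points of \<open>L\<^bsub>Y,a\<^esub>\<close> are joined by the \<open>r\<^sub>a\<close>-image of a line in
  \<open>Y \<times> Y\<^sup>\<perp>\<close>, defined for all parameters \<open>t \<in> \<complex>\<close> outside a finite set. Polynomials restrict to
  holomorphic functions on this connected domain, so by the identity theorem a product vanishing
  on \<open>L\<^bsub>Y,a\<^esub>\<close> forces one factor to vanish along the whole line.

  The tangent space at \<open>r\<^sub>a(q, p)\<close> is the image of \<open>Y \<times> Y\<^sup>\<perp>\<close> under \<open>dr\<^sub>a\<close>: differentiating the
  defining polynomials gives one inclusion, the curves \<open>t \<mapsto> r\<^sub>a((q, p) + t(w, u))\<close> the other. It
  has dimension \<open>dim Y + dim Y\<^sup>\<perp> = n\<close> and is isotropic because the correction term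
  \<open>a\<^sub>j u\<^sub>j u'\<^sub>j / p\<^sub>j\<^sup>2\<close> of \<open>dr\<^sub>a\<close> is symmetric.\<close>

section \<open>The annihilator\<close>

definition pairing :: "complex^'n::finite \<Rightarrow> complex^'n \<Rightarrow> complex" where
  "pairing x y = (\<Sum>j\<in>UNIV. x $ j * y $ j)"

lemma annih_pairing: "annih Y = {p. \<forall>y\<in>Y. pairing p y = 0}"
  by (simp add: annih_def pairing_def)

lemma pairing_commute: "pairing x y = pairing y x"
  by (simp add: pairing_def mult.commute)

lemma pairing_add_left: "pairing (x + y) z = pairing x z + pairing y z"
  by (simp add: pairing_def algebra_simps sum.distrib)

lemma pairing_scale_left: "pairing (c *s x) z = c * pairing x z"
  by (simp add: pairing_def algebra_simps sum_distrib_left)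

lemma pairing_zero_left [simp]: "pairing 0 y = 0"
  by (simp add: pairing_def)

lemma pairing_axis_right: "pairing p (axis j 1) = p $ j"
  unfolding pairing_def axis_def by (simp add: if_distrib cong: if_cong)

lemma subspace_pairing_eq_0: "vec.subspace {y. pairing p y = 0}"
  by (auto simp: vec.subspace_def pairing_commute[of p] pairing_add_left pairing_scale_left)

lemma pairing_span_eq_0:
  assumes "\<forall>c\<in>C. pairing p c = 0" and "y \<in> vec.span C"
  shows "pairing p y = 0"
  using vec.span_minimal[OF _ subspace_pairing_eq_0, of C p] assms by blast

lemma subspace_annih: "vec.subspace (annih Y)"
  by (auto simp: vec.subspace_def annih_pairing pairing_add_left pairing_scale_left)

lemma annih_eq_of_spanning_subset:
  assumes "C \<subseteq> Y" and "Y \<subseteq> vec.span C"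
  shows "annih Y = {p. \<forall>c\<in>C. pairing p c = 0}"
  using assms pairing_span_eq_0 by (fastforce simp: annih_pairing)

lemma dim_coordinate_subspace:
  "vec.dim {w :: 'a::field^'n::finite. \<forall>i. i \<notin> I \<longrightarrow> w $ i = 0} = card I"
proof -
  let ?B = "(\<lambda>i. axis i (1::'a)) ` I"
  have indep: "vec.independent ?B"
    by (rule vec.independent_mono[OF vec.independent_Basis]) (auto simp: cart_basis_def)
  have "{w. \<forall>i. i \<notin> I \<longrightarrow> w $ i = 0} = vec.span ?B"
  proof
    show "{w. \<forall>i. i \<notin> I \<longrightarrow> w $ i = 0} \<subseteq> vec.span ?B"
    proof
      fix w :: "'a^'n" assume w: "w \<in> {w. \<forall>i. i \<notin> I \<longrightarrow> w $ i = 0}"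
      have "w = (\<Sum>i\<in>UNIV. w $ i *s axis i 1)" by (simp add: basis_expansion)
      also have "\<dots> = (\<Sum>i\<in>I. w $ i *s axis i 1)"
        by (rule sum.mono_neutral_right) (use w in auto)
      also have "\<dots> \<in> vec.span ?B"
        by (intro vec.span_sum vec.span_scale vec.span_base) auto
      finally show "w \<in> vec.span ?B" .
    qed
    show "vec.span ?B \<subseteq> {w. \<forall>i. i \<notin> I \<longrightarrow> w $ i = 0}"
      by (rule vec.span_minimal) (auto simp: vec.subspace_def axis_def)
  qed
  moreover have "card ?B = card I"
    by (rule card_image) (auto simp: inj_on_def axis_eq_axis)
  ultimately show ?thesis
    using vec.dim_span_eq_card_independent[OF indep] by simp
qed

lemma linear_pairing_against:
  "Vector_Spaces.linear (*s) (*s) (\<lambda>p. \<chi> i. pairing p (g i))"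
  by unfold_locales (simp_all add: vec_eq_iff pairing_add_left pairing_scale_left)

lemma inj_pairing_against_spanning:
  assumes "range g = D" and "UNIV \<subseteq> vec.span D"
  shows "inj (\<lambda>p. \<chi> i. pairing p (g i))"
proof (rule vec.linear_inj_iff_eq_0[THEN iffD2, OF linear_pairing_against], intro allI impI)
  fix p assume "(\<chi> i. pairing p (g i)) = 0"
  hence "\<forall>d\<in>D. pairing p d = 0" using assms(1) by (auto simp: vec_eq_iff)
  hence "pairing p (axis j 1) = 0" for j using pairing_span_eq_0 assms(2) by blast
  thus "p = 0" by (simp add: vec_eq_iff pairing_axis_right)
qed

text \<open>Pairing against a basis \<open>g\<close> of \<open>\<complex>\<^sup>n\<close> is an isomorphism \<open>\<Phi>\<close> that carries
  the annihilator of \<open>Y\<close> onto the coordinate subspace spanned by the basis vectors outside a basis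
  of \<open>Y\<close>.\<close>
lemma dim_annih_add_dim:
  fixes Y :: "(complex^'n::finite) set"
  assumes "vec.subspace Y"
  shows "vec.dim (annih Y) + vec.dim Y = CARD('n)"
proof -
  obtain C where C: "C \<subseteq> Y" "vec.independent C" "Y \<subseteq> vec.span C" "card C = vec.dim Y"
    using vec.basis_exists[of Y] by blast
  obtain D where D: "C \<subseteq> D" "vec.independent D" "UNIV \<subseteq> vec.span D"
    using vec.maximal_independent_subset_extend[OF subset_UNIV C(2)] by metis
  have finD: "finite D" using D(2) vec.finiteI_independent by blast
  have "card D = vec.dim (vec.span D)"
    using vec.dim_span_eq_card_independent[OF D(2)] by simp
  also have "\<dots> = CARD('n)" using D(3) by (simp add: top.extremum_unique card_cart_basis)
  finally have cardD: "card D = CARD('n)" .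
  then obtain g where g: "bij_betw g (UNIV::'n set) D"
    using finite_same_card_bij[OF finite finD] by (metis card_UNIV_def)
  define \<Phi> where "\<Phi> p = (\<chi> i. pairing p (g i))" for p :: "complex^'n"
  have lin: "Vector_Spaces.linear (*s) (*s) \<Phi>"
    unfolding \<Phi>_def[abs_def] by (rule linear_pairing_against)
  have inj: "inj \<Phi>"
    unfolding \<Phi>_def[abs_def] using g D(3) by (intro inj_pairing_against_spanning) (auto simp: bij_betw_def)
  have surj: "surj \<Phi>" using vec.linear_injective_imp_surjective[OF lin inj] by simp
  define I where "I = {i. g i \<notin> C}"
  have "p \<in> annih Y \<longleftrightarrow> (\<forall>i. i \<notin> I \<longrightarrow> \<Phi> p $ i = 0)" for p
  proof -
    have "C \<subseteq> range g" using g D(1) by (auto simp: bij_betw_def)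
    thus ?thesis by (auto simp: annih_eq_of_spanning_subset[OF C(1,3)] I_def \<Phi>_def)
  qed
  note annih_iff = this
  have "\<Phi> ` annih Y = {w. \<forall>i. i \<notin> I \<longrightarrow> w $ i = 0}"
  proof (intro equalityI subsetI)
    fix w :: "complex^'n" assume "w \<in> {w. \<forall>i. i \<notin> I \<longrightarrow> w $ i = 0}"
    moreover obtain p where "w = \<Phi> p" using surj by blast
    ultimately show "w \<in> \<Phi> ` annih Y" using annih_iff by blast
  qed (use annih_iff in blast)
  moreover have "vec.dim (\<Phi> ` annih Y) = vec.dim (annih Y)"
    by (rule vec.dim_image_eq[OF lin]) (rule inj_on_subset[OF inj subset_UNIV])
  ultimately have "vec.dim (annih Y) = card I"
    by (simp add: dim_coordinate_subspace)
  moreover have "card I = card D - card C"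
  proof -
    have "bij_betw g I (D - C)" using g by (auto simp: I_def bij_betw_def inj_on_def)
    thus ?thesis using D(1) finD by (simp add: bij_betw_same_card card_Diff_subset finite_subset)
  qed
  moreover have "card C \<le> card D" using D(1) finD card_mono by blast
  ultimately show ?thesis using C(4) cardD by simp
qed

lemma annih_annih:
  fixes Y :: "(complex^'n::finite) set"
  assumes "vec.subspace Y"
  shows "annih (annih Y) = Y"
proof -
  have "Y \<subseteq> annih (annih Y)" by (auto simp: annih_pairing pairing_commute)
  moreover have "vec.dim (annih (annih Y)) = vec.dim Y"
    using dim_annih_add_dim[OF assms] dim_annih_add_dim[OF subspace_annih[of Y]] by simp
  ultimately show ?thesis
    using vec.subspace_dim_equal[OF assms subspace_annih, of "annih Y"] by auto
qed

section \<open>Poisson brackets\<close>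

lemma deriv_sum_coordinate_update:
  fixes g :: "'n::finite \<Rightarrow> complex \<Rightarrow> complex"
  assumes "(g j has_field_derivative D) (at z)"
  shows "deriv (\<lambda>t. \<Sum>i\<in>UNIV. g i (if i = j then t else c i)) z = D"
proof -
  have "(\<Sum>i\<in>UNIV. g i (if i = j then t else c i)) = g j t + (\<Sum>i\<in>UNIV-{j}. g i (c i))" for t
    by (simp add: sum.remove[of UNIV j])
  moreover have "((\<lambda>t. g j t + (\<Sum>i\<in>UNIV-{j}. g i (c i))) has_field_derivative D + 0) (at z)"
    by (intro derivative_intros assms)
  ultimately show ?thesis by (simp add: DERIV_imp_deriv)
qed

lemma dq_F_fun: "dq (F_fun \<alpha>) j x = 0"
  unfolding dq_def F_fun_def by simp

lemma dp_F_fun: "dp (F_fun \<alpha>) j x = \<alpha> $ j"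
proof -
  have "dp (F_fun \<alpha>) j x
      = deriv (\<lambda>t. \<Sum>i\<in>UNIV. (\<lambda>i s. \<alpha> $ i * s) i (if i = j then t else snd x $ i)) (snd x $ j)"
    unfolding dp_def F_fun_def by (simp add: if_distrib cong: if_cong)
  also have "\<dots> = \<alpha> $ j"
    by (rule deriv_sum_coordinate_update) (auto intro!: derivative_eq_intros)
  finally show ?thesis .
qed

lemma dq_G_fun: "dq (G_fun a \<beta>) j x = \<beta> $ j"
proof -
  have "dq (G_fun a \<beta>) j x
      = deriv (\<lambda>t. \<Sum>i\<in>UNIV. (\<lambda>i s. \<beta> $ i * (s - a $ i / snd x $ i)) i
                 (if i = j then t else fst x $ i)) (fst x $ j)"
    unfolding dq_def G_fun_def by (simp add: if_distrib cong: if_cong)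
  also have "\<dots> = \<beta> $ j"
    by (rule deriv_sum_coordinate_update) (auto intro!: derivative_eq_intros)
  finally show ?thesis .
qed

lemma dp_G_fun:
  assumes "snd x $ j \<noteq> 0"
  shows "dp (G_fun a \<beta>) j x = \<beta> $ j * a $ j / (snd x $ j)\<^sup>2"
proof -
  have "dp (G_fun a \<beta>) j x
      = deriv (\<lambda>t. \<Sum>i\<in>UNIV. (\<lambda>i s. \<beta> $ i * (fst x $ i - a $ i / s)) i
                 (if i = j then t else snd x $ i)) (snd x $ j)"
    unfolding dp_def G_fun_def by (simp add: if_distrib cong: if_cong)
  also have "\<dots> = \<beta> $ j * a $ j / (snd x $ j)\<^sup>2"
    by (rule deriv_sum_coordinate_update)
      (use assms in \<open>auto intro!: derivative_eq_intros simp: power2_eq_square field_simps\<close>)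
  finally show ?thesis .
qed

lemma in_involution_F_G:
  fixes Y :: "(complex ^ 'n::finite) set"
  shows "in_involution ({F_fun \<alpha> | \<alpha>. \<alpha> \<in> Y} \<union> {G_fun a \<beta> | \<beta>. \<beta> \<in> annih Y}) torusU"
  unfolding in_involution_def
proof (intro ballI)
  fix M N x
  assume M: "M \<in> {F_fun \<alpha> | \<alpha>. \<alpha> \<in> Y} \<union> {G_fun a \<beta> | \<beta>. \<beta> \<in> annih Y}"
    and N: "N \<in> {F_fun \<alpha> | \<alpha>. \<alpha> \<in> Y} \<union> {G_fun a \<beta> | \<beta>. \<beta> \<in> annih Y}"
    and x: "(x :: 'n phase) \<in> torusU"
  have nz: "snd x $ j \<noteq> 0" for j using x by (simp add: torusU_def)
  have orth: "(\<Sum>j\<in>UNIV. \<alpha> $ j * \<beta> $ j) = 0" if "\<alpha> \<in> Y" "\<beta> \<in> annih Y" for \<alpha> \<beta>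
    using that by (auto simp: annih_def mult.commute)
  from M N show "poisson M N x = 0"
  proof (elim UnE CollectE exE conjE)
    fix \<alpha> \<alpha>' assume "M = F_fun \<alpha>" "N = F_fun \<alpha>'"
    thus ?thesis by (simp add: poisson_def dq_F_fun)
  next
    fix \<alpha> \<beta> assume "M = F_fun \<alpha>" "N = G_fun a \<beta>" "\<alpha> \<in> Y" "\<beta> \<in> annih Y"
    thus ?thesis using orth by (simp add: poisson_def dq_F_fun dp_F_fun dq_G_fun sum_negf)
  next
    fix \<alpha> \<beta> assume "N = F_fun \<alpha>" "M = G_fun a \<beta>" "\<alpha> \<in> Y" "\<beta> \<in> annih Y"
    thus ?thesis using orth[of \<alpha> \<beta>] by (simp add: poisson_def dq_F_fun dp_F_fun dq_G_fun mult.commute)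
  next
    fix \<beta> \<beta>' assume "M = G_fun a \<beta>" "N = G_fun a \<beta>'"
    thus ?thesis by (simp add: poisson_def dq_G_fun dp_G_fun nz)
  qed
qed

section \<open>Equations of \<open>L\<^bsub>Y,a\<^esub>\<close>\<close>

lemma mem_L_Ya_iff:
  "x \<in> L_Ya Y a \<longleftrightarrow>
     (\<exists>y. x = r_map a y \<and> fst y \<in> Y \<and> snd y \<in> annih Y \<and> (\<forall>j. snd y $ j \<noteq> 0))"
proof
  assume "x \<in> L_Ya Y a"
  then obtain y where "x = r_map a y" "y \<in> {x. fst x \<in> Y \<and> snd x \<in> annih Y \<and> (\<forall>j. snd x $ j \<noteq> 0)}"
    unfolding L_Ya_def by (rule imageE)
  thus "\<exists>y. x = r_map a y \<and> fst y \<in> Y \<and> snd y \<in> annih Y \<and> (\<forall>j. snd y $ j \<noteq> 0)" by blast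
qed (auto simp: L_Ya_def)

lemma r_map_line_mem_L_Ya:
  fixes Y :: "(complex ^ 'n::finite) set"
  assumes "vec.subspace Y" and "fst y \<in> Y" "snd y \<in> annih Y" "w \<in> Y" "u \<in> annih Y"
    and "\<forall>j. snd y $ j + t * u $ j \<noteq> 0"
  shows "r_map a (fst y + t *s w, snd y + t *s u) \<in> L_Ya Y a"
  unfolding mem_L_Ya_iff
proof (intro exI conjI)
  show "fst (fst y + t *s w, snd y + t *s u) \<in> Y"
    using assms by (simp add: vec.subspace_add vec.subspace_scale)
  show "snd (fst y + t *s w, snd y + t *s u) \<in> annih Y"
    using assms subspace_annih[of Y] by (simp add: vec.subspace_add vec.subspace_scale)
qed (use assms in simp_all)

lemma L_Ya_subset_zero_set:
  "L_Ya Y a \<subseteq> {x \<in> torusU. (\<forall>\<alpha>\<in>Y. F_fun \<alpha> x = 0) \<and> (\<forall>\<beta>\<in>annih Y. G_fun a \<beta> x = 0)}"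
proof
  fix x assume "x \<in> L_Ya Y a"
  then obtain y where x: "x = r_map a y" and y: "fst y \<in> Y" "snd y \<in> annih Y" "\<forall>j. snd y $ j \<noteq> 0"
    by (auto simp: mem_L_Ya_iff)
  have sx: "snd x = snd y" and fx: "fst x $ j - a $ j / snd x $ j = fst y $ j" for j
    by (simp_all add: x r_map_def)
  have "F_fun \<alpha> x = 0" if "\<alpha> \<in> Y" for \<alpha>
    using y(2) that by (simp add: sx F_fun_def annih_def mult.commute)
  moreover have "G_fun a \<beta> x = 0" if "\<beta> \<in> annih Y" for \<beta>
    using y(1) that unfolding G_fun_def fx annih_def by blast
  moreover have "x \<in> torusU" using y(3) by (simp add: sx torusU_def)
  ultimately show "x \<in> {x \<in> torusU. (\<forall>\<alpha>\<in>Y. F_fun \<alpha> x = 0) \<and> (\<forall>\<beta>\<in>annih Y. G_fun a \<beta> x = 0)}"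
    by blast
qed

lemma zero_set_subset_L_Ya:
  fixes Y :: "(complex ^ 'n::finite) set"
  assumes "vec.subspace Y"
  shows "{x \<in> torusU. (\<forall>\<alpha>\<in>Y. F_fun \<alpha> x = 0) \<and> (\<forall>\<beta>\<in>annih Y. G_fun a \<beta> x = 0)} \<subseteq> L_Ya Y a"
proof
  fix x assume x: "x \<in> {x \<in> torusU. (\<forall>\<alpha>\<in>Y. F_fun \<alpha> x = 0) \<and> (\<forall>\<beta>\<in>annih Y. G_fun a \<beta> x = 0)}"
  define y where "y = ((\<chi> j. fst x $ j - a $ j / snd x $ j), snd x)"
  have nz: "\<forall>j. snd x $ j \<noteq> 0" using x by (simp add: torusU_def)
  have "fst y \<in> annih (annih Y)"
    unfolding annih_def[of "annih Y"]
  proof (intro CollectI ballI)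
    fix \<beta> assume "\<beta> \<in> annih Y"
    hence "G_fun a \<beta> x = 0" using x by blast
    thus "(\<Sum>j\<in>UNIV. fst y $ j * \<beta> $ j) = 0" by (simp add: y_def G_fun_def mult.commute)
  qed
  moreover have "snd y \<in> annih Y"
    unfolding annih_def
  proof (intro CollectI ballI)
    fix \<alpha> assume "\<alpha> \<in> Y"
    hence "F_fun \<alpha> x = 0" using x by blast
    thus "(\<Sum>j\<in>UNIV. snd y $ j * \<alpha> $ j) = 0" by (simp add: y_def F_fun_def mult.commute)
  qed
  moreover have "x = r_map a y" using nz by (simp add: r_map_def y_def vec_eq_iff)
  ultimately show "x \<in> L_Ya Y a"
    using nz annih_annih[OF assms] unfolding mem_L_Ya_iff y_def by fastforce
qed

lemma L_Ya_eq_zero_set: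
  fixes Y :: "(complex ^ 'n::finite) set"
  assumes "vec.subspace Y"
  shows "L_Ya Y a = {x \<in> torusU. (\<forall>\<alpha>\<in>Y. F_fun \<alpha> x = 0) \<and> (\<forall>\<beta>\<in>annih Y. G_fun a \<beta> x = 0)}"
  using L_Ya_subset_zero_set zero_set_subset_L_Ya[OF assms] by (rule equalityI)

lemma polyfun_sum:
  "finite A \<Longrightarrow> (\<And>i. i \<in> A \<Longrightarrow> f i \<in> polyfun) \<Longrightarrow> (\<lambda>x. \<Sum>i\<in>A. f i x) \<in> polyfun"
  by (induction A rule: finite_induct) (auto intro: polyfun.intros polyfun.const[of 0])

lemma polyfun_prod:
  "finite A \<Longrightarrow> (\<And>i. i \<in> A \<Longrightarrow> f i \<in> polyfun) \<Longrightarrow> (\<lambda>x. \<Prod>i\<in>A. f i x) \<in> polyfun"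
  by (induction A rule: finite_induct) (auto intro: polyfun.intros polyfun.const[of 1])

lemma polyfun_scale: "f \<in> polyfun \<Longrightarrow> (\<lambda>x. c * f x) \<in> polyfun"
  using polyfun.mult[OF polyfun.const] by blast

lemma F_fun_polyfun: "F_fun \<alpha> \<in> polyfun"
  unfolding F_fun_def by (auto intro!: polyfun_sum polyfun_scale polyfun.pcoord)

text \<open>\<open>G_fun a \<beta>\<close> is not polynomial; multiplying by \<open>\<Prod>j p\<^sub>j\<close> clears its denominators
  without changing its zero set in \<open>torusU\<close>.\<close>
definition G_numerator :: "complex ^ 'n \<Rightarrow> complex ^ 'n \<Rightarrow> 'n::finite phase \<Rightarrow> complex" where
  "G_numerator a \<beta> x = (\<Sum>j\<in>UNIV. \<beta> $ j * fst x $ j) * (\<Prod>i\<in>UNIV. snd x $ i)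
     - (\<Sum>j\<in>UNIV. \<beta> $ j * a $ j * (\<Prod>i\<in>UNIV-{j}. snd x $ i))"

lemma G_numerator_polyfun: "G_numerator a \<beta> \<in> polyfun"
proof -
  have "(\<lambda>x. (\<Sum>j\<in>UNIV. \<beta> $ j * fst x $ j) * (\<Prod>i\<in>UNIV. snd x $ i) +
      (-1) * (\<Sum>j\<in>UNIV. (\<beta> $ j * a $ j) * (\<Prod>i\<in>UNIV-{j}. snd x $ i))) \<in> polyfun"
    by (intro polyfun.add polyfun.mult polyfun_scale polyfun_sum polyfun_prod
        polyfun.qcoord polyfun.pcoord finite)
  thus ?thesis unfolding G_numerator_def by (simp add: mult.assoc)
qed

lemma G_numerator_eq:
  assumes "x \<in> torusU"
  shows "G_numerator a \<beta> x = G_fun a \<beta> x * (\<Prod>i\<in>UNIV. snd x $ i)"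
proof -
  have cancel: "(\<Prod>i\<in>UNIV. snd x $ i) / snd x $ j = (\<Prod>i\<in>UNIV-{j}. snd x $ i)" for j
  proof -
    have "(\<Prod>i\<in>UNIV. snd x $ i) = snd x $ j * (\<Prod>i\<in>UNIV-{j}. snd x $ i)"
      by (simp add: prod.remove)
    thus ?thesis using assms by (simp add: torusU_def)
  qed
  have "G_fun a \<beta> x * (\<Prod>i\<in>UNIV. snd x $ i) = (\<Sum>j\<in>UNIV. \<beta> $ j * fst x $ j * (\<Prod>i\<in>UNIV. snd x $ i)
      - \<beta> $ j * a $ j * ((\<Prod>i\<in>UNIV. snd x $ i) / snd x $ j))"
    unfolding G_fun_def sum_distrib_right by (rule sum.cong) (auto simp: algebra_simps)
  also have "\<dots> = G_numerator a \<beta> x"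
    unfolding cancel G_numerator_def sum_subtractf sum_distrib_right ..
  finally show ?thesis by simp
qed

lemma G_numerator_eq_0_iff:
  "x \<in> torusU \<Longrightarrow> G_numerator a \<beta> x = 0 \<longleftrightarrow> G_fun a \<beta> x = 0"
  by (simp add: G_numerator_eq torusU_def)

lemma closed_in_U_L_Ya:
  fixes Y :: "(complex ^ 'n::finite) set"
  assumes "vec.subspace Y"
  shows "closed_in_U (L_Ya Y a)"
  unfolding closed_in_U_def
proof (intro exI conjI)
  let ?S = "{F_fun \<alpha> | \<alpha>. \<alpha> \<in> Y} \<union> {G_numerator a \<beta> | \<beta>. \<beta> \<in> annih Y}"
  show "?S \<subseteq> polyfun" using F_fun_polyfun G_numerator_polyfun by auto
  show "L_Ya Y a = {x \<in> torusU. \<forall>f\<in>?S. f x = 0}"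
    unfolding L_Ya_eq_zero_set[OF assms]
    by (intro Collect_cong conj_cong refl) (use G_numerator_eq_0_iff in blast)
qed

section \<open>Derivatives of polynomials along curves\<close>

definition has_phase_velocity :: "(complex \<Rightarrow> 'n::finite phase) \<Rightarrow> 'n phase \<Rightarrow> complex \<Rightarrow> bool" where
  "has_phase_velocity \<gamma> v t \<longleftrightarrow>
     (\<forall>j. ((\<lambda>s. fst (\<gamma> s) $ j) has_field_derivative fst v $ j) (at t)) \<and>
     (\<forall>j. ((\<lambda>s. snd (\<gamma> s) $ j) has_field_derivative snd v $ j) (at t))"

lemma polyfun_derivative_along_curves:
  assumes "f \<in> polyfun"
  shows "\<exists>d. \<forall>\<gamma> t. \<gamma> t = x \<longrightarrow> has_phase_velocity \<gamma> v t \<longrightarrow>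
           ((\<lambda>s. f (\<gamma> s)) has_field_derivative d) (at t)"
  using assms
proof induction
  case (const c)
  show ?case by (intro exI[of _ 0] allI impI DERIV_const)
next
  case (qcoord j)
  show ?case by (rule exI[of _ "fst v $ j"]) (simp add: has_phase_velocity_def)
next
  case (pcoord j)
  show ?case by (rule exI[of _ "snd v $ j"]) (simp add: has_phase_velocity_def)
next
  case (add f g)
  from add.IH(1) obtain d1 where
    "\<forall>\<gamma> t. \<gamma> t = x \<longrightarrow> has_phase_velocity \<gamma> v t \<longrightarrow> ((\<lambda>s. f (\<gamma> s)) has_field_derivative d1) (at t)" ..
  moreover from add.IH(2) obtain d2 where
    "\<forall>\<gamma> t. \<gamma> t = x \<longrightarrow> has_phase_velocity \<gamma> v t \<longrightarrow> ((\<lambda>s. g (\<gamma> s)) has_field_derivative d2) (at t)" ..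
  ultimately show ?case by (intro exI[of _ "d1 + d2"] allI impI) (simp add: DERIV_add)
next
  case (mult f g)
  from mult.IH(1) obtain d1 where d1:
    "\<forall>\<gamma> t. \<gamma> t = x \<longrightarrow> has_phase_velocity \<gamma> v t \<longrightarrow> ((\<lambda>s. f (\<gamma> s)) has_field_derivative d1) (at t)" ..
  from mult.IH(2) obtain d2 where d2:
    "\<forall>\<gamma> t. \<gamma> t = x \<longrightarrow> has_phase_velocity \<gamma> v t \<longrightarrow> ((\<lambda>s. g (\<gamma> s)) has_field_derivative d2) (at t)" ..
  show ?case
  proof (intro exI[of _ "d1 * g x + d2 * f x"] allI impI)
    fix \<gamma> t assume \<gamma>: "\<gamma> t = x" "has_phase_velocity \<gamma> v t"
    have "((\<lambda>s. f (\<gamma> s) * g (\<gamma> s)) has_field_derivative d1 * g (\<gamma> t) + d2 * f (\<gamma> t)) (at t)"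
      by (intro DERIV_mult) (simp_all add: d1 d2 \<gamma>)
    thus "((\<lambda>s. f (\<gamma> s) * g (\<gamma> s)) has_field_derivative d1 * g x + d2 * f x) (at t)"
      by (simp add: \<gamma>(1))
  qed
qed

lemma polyfun_has_dirderiv_along_curve:
  assumes "f \<in> polyfun" and "\<gamma> t = x" and "has_phase_velocity \<gamma> v t"
  shows "((\<lambda>s. f (\<gamma> s)) has_field_derivative dirderiv f x v) (at t)"
proof -
  obtain d where d: "\<forall>\<gamma> t. \<gamma> t = x \<longrightarrow> has_phase_velocity \<gamma> v t \<longrightarrow>
      ((\<lambda>s. f (\<gamma> s)) has_field_derivative d) (at t)"
    using polyfun_derivative_along_curves[OF assms(1)] by blast
  let ?line = "\<lambda>s::complex. (fst x + s *s fst v, snd x + s *s snd v)"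
  have "has_phase_velocity ?line v 0"
    by (auto simp: has_phase_velocity_def intro!: derivative_eq_intros)
  hence "((\<lambda>s. f (?line s)) has_field_derivative d) (at 0)" using d by simp
  hence "dirderiv f x v = d" unfolding dirderiv_def by (rule DERIV_imp_deriv)
  thus ?thesis using d assms(2,3) by blast
qed

lemma tangent_spaceI:
  assumes "\<gamma> 0 = x" and "has_phase_velocity \<gamma> v 0" and "open S" "0 \<in> S" "\<gamma> ` S \<subseteq> V"
  shows "v \<in> tangent_space V x"
  unfolding tangent_space_def
proof (intro CollectI ballI impI)
  fix f assume f: "f \<in> polyfun" and fV: "\<forall>y\<in>V. f y = 0"
  have "((\<lambda>s. f (\<gamma> s)) has_field_derivative dirderiv f x v) (at 0)"
    by (rule polyfun_has_dirderiv_along_curve[OF f assms(1,2)])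
  hence "((\<lambda>s. 0) has_field_derivative dirderiv f x v) (at 0)"
    by (rule has_field_derivative_transform_within_open[OF _ assms(3,4)]) (use assms(5) fV in blast)
  thus "dirderiv f x v = 0" using DERIV_const DERIV_unique by blast
qed

lemma open_nonvanishing_affine: "open {t::complex. \<forall>j::'n::finite. c j + t * e j \<noteq> 0}"
proof -
  have "{t::complex. \<forall>j::'n. c j + t * e j \<noteq> 0} = (\<Inter>j. {t. c j + t * e j \<noteq> 0})" by auto
  moreover have "open {t::complex. c j + t * e j \<noteq> 0}" for j
    by (rule open_Collect_neq) (auto intro!: continuous_intros)
  ultimately show ?thesis by (auto intro!: open_INT)
qed

lemma r_map_line_velocity:
  assumes "\<forall>j. snd y $ j + t * u $ j \<noteq> 0"
  shows "has_phase_velocity (\<lambda>s. r_map a (fst y + s *s w, snd y + s *s u))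
    ((\<chi> j. w $ j - a $ j * u $ j / (snd y $ j + t * u $ j)\<^sup>2), u) t"
  unfolding has_phase_velocity_def r_map_def
  using assms by (auto intro!: derivative_eq_intros simp: power2_eq_square field_simps)

section \<open>The tangent spaces\<close>

lemma dirderiv_F_fun: "dirderiv (F_fun \<alpha>) x v = (\<Sum>j\<in>UNIV. \<alpha> $ j * snd v $ j)"
proof -
  have "((\<lambda>t. F_fun \<alpha> (fst x + t *s fst v, snd x + t *s snd v)) has_field_derivative
      (\<Sum>j\<in>UNIV. \<alpha> $ j * snd v $ j)) (at 0)"
    unfolding F_fun_def by (auto intro!: derivative_eq_intros simp: mult.commute)
  thus ?thesis unfolding dirderiv_def by (rule DERIV_imp_deriv)
qed

text \<open>On the zero set of \<open>G_fun a \<beta>\<close> the product rule kills the derivative of the factor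
  \<open>\<Prod>j p\<^sub>j\<close>.\<close>
lemma dirderiv_G_numerator:
  assumes x: "x \<in> torusU" and G0: "G_fun a \<beta> x = 0"
  shows "dirderiv (G_numerator a \<beta>) x v = (\<Prod>i\<in>UNIV. snd x $ i) *
           (\<Sum>j\<in>UNIV. \<beta> $ j * (fst v $ j + a $ j * snd v $ j / (snd x $ j)\<^sup>2))"
proof -
  have nz: "snd x $ j \<noteq> 0" for j using x by (simp add: torusU_def)
  let ?g = "\<lambda>t. G_fun a \<beta> (fst x + t *s fst v, snd x + t *s snd v)"
  let ?P = "\<lambda>t. \<Prod>i\<in>UNIV. snd x $ i + t * snd v $ i"
  let ?G' = "\<Sum>j\<in>UNIV. \<beta> $ j * (fst v $ j + a $ j * snd v $ j / (snd x $ j)\<^sup>2)"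
  have g: "(?g has_field_derivative ?G') (at 0)"
    unfolding G_fun_def
    by (auto intro!: derivative_eq_intros sum.cong simp: nz power2_eq_square field_simps)
  have "(?P has_field_derivative
      (\<Sum>i\<in>UNIV. snd v $ i * (\<Prod>k\<in>UNIV-{i}. snd x $ k + 0 * snd v $ k))) (at 0)"
    by (rule has_field_derivative_prod) (auto intro!: derivative_eq_intros)
  then obtain P' where P: "(?P has_field_derivative P') (at 0)" ..
  have "((\<lambda>t. ?g t * ?P t) has_field_derivative ?G' * ?P 0 + P' * ?g 0) (at 0)"
    by (rule DERIV_mult[OF g P])
  hence D: "((\<lambda>t. ?g t * ?P t) has_field_derivative ?G' * (\<Prod>i\<in>UNIV. snd x $ i)) (at 0)"
    using G0 by simp
  have "((\<lambda>t. G_numerator a \<beta> (fst x + t *s fst v, snd x + t *s snd v)) has_field_derivative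
      ?G' * (\<Prod>i\<in>UNIV. snd x $ i)) (at 0)"
  proof (rule has_field_derivative_transform_within_open[OF D open_nonvanishing_affine])
    show "0 \<in> {t. \<forall>j. snd x $ j + t * snd v $ j \<noteq> 0}" using nz by simp
    fix t assume "t \<in> {t. \<forall>j. snd x $ j + t * snd v $ j \<noteq> 0}"
    hence "(fst x + t *s fst v, snd x + t *s snd v) \<in> torusU" by (simp add: torusU_def)
    thus "?g t * ?P t = G_numerator a \<beta> (fst x + t *s fst v, snd x + t *s snd v)"
      by (simp add: G_numerator_eq)
  qed
  thus ?thesis unfolding dirderiv_def by (simp add: DERIV_imp_deriv mult.commute)
qed

text \<open>The image of \<open>Y \<times> Y\<^sup>\<perp>\<close> under the differential \<open>(w, u) \<mapsto> (w - a u / p\<^sup>2, u)\<close>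
  of \<open>r_map a\<close> at the preimage of \<open>x\<close>.\<close>
definition lagrangian_tangent :: "(complex ^ 'n) set \<Rightarrow> complex ^ 'n \<Rightarrow> 'n::finite phase \<Rightarrow> 'n phase set" where
  "lagrangian_tangent Y a x =
     {v. snd v \<in> annih Y \<and> (\<chi> j. fst v $ j + a $ j * snd v $ j / (snd x $ j)\<^sup>2) \<in> Y}"

lemma tangent_space_subset_lagrangian_tangent:
  fixes Y :: "(complex ^ 'n::finite) set"
  assumes Y: "vec.subspace Y" and x: "x \<in> L_Ya Y a"
  shows "tangent_space (L_Ya Y a) x \<subseteq> lagrangian_tangent Y a x"
proof
  fix v assume v: "v \<in> tangent_space (L_Ya Y a) x"
  have vanishing: "dirderiv f x v = 0" if "f \<in> polyfun" "\<forall>y\<in>L_Ya Y a. f y = 0" for f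
    using v that unfolding tangent_space_def by blast
  have xZ: "x \<in> torusU" "\<forall>\<beta>\<in>annih Y. G_fun a \<beta> x = 0"
    using x unfolding L_Ya_eq_zero_set[OF Y] by auto
  have "snd v \<in> annih Y"
    unfolding annih_def
  proof (intro CollectI ballI)
    fix \<alpha> assume "\<alpha> \<in> Y"
    hence "dirderiv (F_fun \<alpha>) x v = 0"
      by (intro vanishing F_fun_polyfun) (auto simp: L_Ya_eq_zero_set[OF Y])
    thus "(\<Sum>j\<in>UNIV. snd v $ j * \<alpha> $ j) = 0" by (simp add: dirderiv_F_fun mult.commute)
  qed
  moreover have "(\<chi> j. fst v $ j + a $ j * snd v $ j / (snd x $ j)\<^sup>2) \<in> annih (annih Y)"
    unfolding annih_def[of "annih Y"]
  proof (intro CollectI ballI)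
    fix \<beta> assume \<beta>: "\<beta> \<in> annih Y"
    have "G_numerator a \<beta> y = 0" if "y \<in> L_Ya Y a" for y
      using that \<beta> G_numerator_eq_0_iff[of y a \<beta>] unfolding L_Ya_eq_zero_set[OF Y] by blast
    hence "dirderiv (G_numerator a \<beta>) x v = 0"
      by (intro vanishing G_numerator_polyfun) blast
    thus "(\<Sum>j\<in>UNIV. (\<chi> j. fst v $ j + a $ j * snd v $ j / (snd x $ j)\<^sup>2) $ j * \<beta> $ j) = 0"
      using \<beta> xZ by (simp add: dirderiv_G_numerator torusU_def mult.commute)
  qed
  ultimately show "v \<in> lagrangian_tangent Y a x"
    using annih_annih[OF Y] by (simp add: lagrangian_tangent_def)
qed

lemma lagrangian_tangent_subset_tangent_space:
  fixes Y :: "(complex ^ 'n::finite) set"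
  assumes Y: "vec.subspace Y" and x: "x \<in> L_Ya Y a"
  shows "lagrangian_tangent Y a x \<subseteq> tangent_space (L_Ya Y a) x"
proof
  fix v assume v: "v \<in> lagrangian_tangent Y a x"
  obtain y where x_eq: "x = r_map a y" and y: "fst y \<in> Y" "snd y \<in> annih Y" "\<forall>j. snd y $ j \<noteq> 0"
    using x unfolding mem_L_Ya_iff by blast
  define w where "w = (\<chi> j. fst v $ j + a $ j * snd v $ j / (snd y $ j)\<^sup>2)"
  have w: "w \<in> Y" and u: "snd v \<in> annih Y"
    using v x_eq by (auto simp: lagrangian_tangent_def w_def r_map_def)
  let ?S = "{t. \<forall>j. snd y $ j + t * snd v $ j \<noteq> 0}"
  show "v \<in> tangent_space (L_Ya Y a) x"
  proof (rule tangent_spaceI)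
    show "has_phase_velocity (\<lambda>s. r_map a (fst y + s *s w, snd y + s *s snd v)) v 0"
      using r_map_line_velocity[of y 0 "snd v" a w] y(3) by (simp add: w_def)
    show "(\<lambda>s. r_map a (fst y + s *s w, snd y + s *s snd v)) ` ?S \<subseteq> L_Ya Y a"
      using r_map_line_mem_L_Ya[OF Y y(1,2) w u] by blast
  qed (use x_eq y(3) in \<open>simp_all add: open_nonvanishing_affine\<close>)
qed

interpretation phase_space: finite_dimensional_vector_space_prod
  "(*s) :: complex \<Rightarrow> complex^'n::finite \<Rightarrow> complex^'n"
  "(*s) :: complex \<Rightarrow> complex^'n::finite \<Rightarrow> complex^'n"
  "cart_basis :: (complex^'n) set" "cart_basis :: (complex^'n) set" ..

lemma phase_space_scale_eq_pscale: "phase_space.scale = pscale"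
  by (auto simp: phase_space.scale_def pscale_def fun_eq_iff)

lemma pdim_eq_phase_space_dim: "pdim T = phase_space.p.dim T"
  by (simp add: pdim_def phase_space_scale_eq_pscale)

lemma pdim_lagrangian_tangent:
  fixes Y :: "(complex ^ 'n::finite) set"
  assumes Y: "vec.subspace Y"
  shows "pdim (lagrangian_tangent Y a x) = CARD('n)"
proof -
  interpret pair: finite_dimensional_vector_space_pair_1
    phase_space.scale phase_space.Basis_pair phase_space.scale ..
  define h where "h u = (\<chi> j. a $ j * u $ j / (snd x $ j)\<^sup>2)" for u :: "complex^'n"
  define \<psi> where "\<psi> z = (fst z - h (snd z), snd z)" for z :: "'n phase"
  have lin: "Vector_Spaces.linear phase_space.scale phase_space.scale \<psi>"
    by unfold_locales
      (auto simp: \<psi>_def h_def phase_space.scale_def vec_eq_iff algebra_simps add_divide_distrib)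
  have inj: "inj \<psi>" by (auto simp: inj_def \<psi>_def)
  have "lagrangian_tangent Y a x = \<psi> ` (Y \<times> annih Y)"
  proof (intro equalityI subsetI)
    fix v assume v: "v \<in> lagrangian_tangent Y a x"
    have "v = \<psi> (fst v + h (snd v), snd v)" by (simp add: \<psi>_def)
    moreover have "fst v + h (snd v) \<in> Y" "snd v \<in> annih Y"
      using v by (auto simp: lagrangian_tangent_def h_def plus_vec_def)
    ultimately show "v \<in> \<psi> ` (Y \<times> annih Y)" by blast
  qed (auto simp: lagrangian_tangent_def \<psi>_def h_def)
  hence "pdim (lagrangian_tangent Y a x) = phase_space.p.dim (Y \<times> annih Y)"
    unfolding pdim_eq_phase_space_dim
    by (metis pair.dim_image_eq[OF lin] inj inj_on_subset subset_UNIV)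
  also have "\<dots> = vec.dim Y + vec.dim (annih Y)"
    by (rule phase_space.dim_Times[OF Y subspace_annih])
  also have "\<dots> = CARD('n)" using dim_annih_add_dim[OF Y] by simp
  finally show ?thesis .
qed

lemma omega_lagrangian_tangent:
  assumes "v \<in> lagrangian_tangent Y a x" and "v' \<in> lagrangian_tangent Y a x"
  shows "omega v v' = 0"
proof -
  define y where "y = (\<chi> j. fst v $ j + a $ j * snd v $ j / (snd x $ j)\<^sup>2)"
  define y' where "y' = (\<chi> j. fst v' $ j + a $ j * snd v' $ j / (snd x $ j)\<^sup>2)"
  have "(\<Sum>j\<in>UNIV. snd v $ j * y' $ j) = 0" "(\<Sum>j\<in>UNIV. snd v' $ j * y $ j) = 0"
    using assms unfolding lagrangian_tangent_def annih_def y_def y'_def by auto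
  moreover have "omega v v' = (\<Sum>j\<in>UNIV. snd v $ j * y' $ j - snd v' $ j * y $ j)"
    unfolding omega_def by (rule sum.cong) (auto simp: y_def y'_def algebra_simps)
  ultimately show ?thesis by (simp add: sum_subtractf)
qed

section \<open>Irreducibility\<close>

text \<open>Choose the coordinates one at a time: adding to a vector a multiple \<open>c b\<close> with
  \<open>b\<^sub>k \<noteq> 0\<close> makes coordinate \<open>k\<close> nonzero, and only finitely many values of \<open>c\<close> spoil
  a coordinate that was already nonzero.\<close>
lemma subspace_exists_nonvanishing_coordinates:
  fixes V :: "(complex ^ 'n::finite) set"
  assumes V: "vec.subspace V" and nontrivial: "\<forall>j. \<exists>v\<in>V. v $ j \<noteq> 0"
  shows "\<exists>v\<in>V. \<forall>j. v $ j \<noteq> 0"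
proof -
  have "\<exists>v\<in>V. \<forall>j\<in>J. v $ j \<noteq> 0" if "finite J" for J :: "'n set"
    using that
  proof (induction J rule: finite_induct)
    case empty
    thus ?case using vec.subspace_0[OF V] by blast
  next
    case (insert k J)
    then obtain v where v: "v \<in> V" "\<forall>j\<in>J. v $ j \<noteq> 0" by blast
    obtain b where b: "b \<in> V" "b $ k \<noteq> 0" using nontrivial by blast
    have "finite ((\<lambda>j. - v $ j / b $ j) ` insert k J)" using insert.hyps(1) by simp
    then obtain c :: complex where c: "c \<notin> (\<lambda>j. - v $ j / b $ j) ` insert k J"
      using ex_new_if_finite[OF infinite_UNIV_char_0] by blast
    have "(v + c *s b) $ j \<noteq> 0" if j: "j \<in> insert k J" for j
    proof
      assume vanish: "(v + c *s b) $ j = 0"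
      show False
      proof (cases "b $ j = 0")
        case True
        hence "j \<in> J" using j b(2) by auto
        thus False using vanish True v(2) by simp
      next
        case False
        hence "c = - v $ j / b $ j" using vanish by (simp add: field_simps add_eq_0_iff)
        thus False using c j by blast
      qed
    qed
    moreover have "v + c *s b \<in> V"
      using v b V by (simp add: vec.subspace_add vec.subspace_scale)
    ultimately show ?case by blast
  qed
  from this[of UNIV] show ?thesis by simp
qed

lemma connected_cofinite_complex: "finite (- S) \<Longrightarrow> connected (S :: complex set)"
  using path_connected_complement_countable[of "- S"]
  by (simp add: countable_finite path_connected_imp_connected)

lemma connected_nonvanishing_affine:
  assumes "\<forall>j. c j \<noteq> 0"
  shows "connected {t::complex. \<forall>j::'n::finite. c j + t * e j \<noteq> 0}"
proof (rule connected_cofinite_complex)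
  have "- {t. \<forall>j. c j + t * e j \<noteq> 0} \<subseteq> (\<lambda>j. - c j / e j) ` UNIV"
  proof
    fix t assume "t \<in> - {t. \<forall>j. c j + t * e j \<noteq> 0}"
    then obtain j where j: "c j + t * e j = 0" by auto
    hence "e j \<noteq> 0" using assms by auto
    hence "t = - c j / e j" using j by (simp add: field_simps add_eq_0_iff)
    thus "t \<in> (\<lambda>j. - c j / e j) ` UNIV" by blast
  qed
  thus "finite (- {t. \<forall>j. c j + t * e j \<noteq> 0})" by (simp add: finite_subset)
qed

lemma holomorphic_mult_eq_0_imp_eq_0:
  assumes "f holomorphic_on S" and "g holomorphic_on S" and "open S" and "connected S"
    and "\<forall>z\<in>S. f z * g z = 0" and "z \<in> S" "f z \<noteq> 0" and "w \<in> S"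
  shows "g w = 0"
proof -
  define U where "U = S \<inter> f -` (- {0})"
  have "open U" unfolding U_def
    by (rule continuous_open_preimage[OF holomorphic_on_imp_continuous_on]) (use assms in auto)
  moreover have "z \<in> U" using assms by (simp add: U_def)
  ultimately have "z islimpt U" by (simp add: interior_limit_point interior_open)
  show ?thesis
    by (rule analytic_continuation[OF assms(2-4) _ assms(6) \<open>z islimpt U\<close> _ assms(8)])
      (use assms(5) in \<open>auto simp: U_def\<close>)
qed

lemma L_Ya_connecting_line:
  fixes Y :: "(complex ^ 'n::finite) set"
  assumes Y: "vec.subspace Y" and x1: "x1 \<in> L_Ya Y a" and x2: "x2 \<in> L_Ya Y a"
  obtains S c where "open S" "connected S" "0 \<in> S" "1 \<in> S" "c 0 = x1" "c 1 = x2"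
    "c ` S \<subseteq> L_Ya Y a" "\<And>f. f \<in> polyfun \<Longrightarrow> (\<lambda>t. f (c t)) holomorphic_on S"
proof -
  obtain y1 where x1_eq: "x1 = r_map a y1" and y1: "fst y1 \<in> Y" "snd y1 \<in> annih Y" "\<forall>j. snd y1 $ j \<noteq> 0"
    using x1 unfolding mem_L_Ya_iff by blast
  obtain y2 where x2_eq: "x2 = r_map a y2" and y2: "fst y2 \<in> Y" "snd y2 \<in> annih Y" "\<forall>j. snd y2 $ j \<noteq> 0"
    using x2 unfolding mem_L_Ya_iff by blast
  define w where "w = fst y2 - fst y1"
  define u where "u = snd y2 - snd y1"
  define S where "S = {t. \<forall>j. snd y1 $ j + t * u $ j \<noteq> 0}"
  define c where "c t = r_map a (fst y1 + t *s w, snd y1 + t *s u)" for t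
  have "w \<in> Y" using Y y1(1) y2(1) by (simp add: w_def vec.subspace_diff)
  moreover have "u \<in> annih Y" using subspace_annih[of Y] y1(2) y2(2) by (simp add: u_def vec.subspace_diff)
  ultimately have "c ` S \<subseteq> L_Ya Y a"
    using r_map_line_mem_L_Ya[OF Y y1(1,2)] by (auto simp: c_def S_def)
  moreover have "connected S"
    unfolding S_def using y1(3) by (rule connected_nonvanishing_affine)
  moreover have "(\<lambda>t. f (c t)) holomorphic_on S" if f: "f \<in> polyfun" for f
    unfolding holomorphic_on_def
  proof
    fix t assume "t \<in> S"
    define v where "v = ((\<chi> j. w $ j - a $ j * u $ j / (snd y1 $ j + t * u $ j)\<^sup>2), u)"
    have "has_phase_velocity c v t"
      using \<open>t \<in> S\<close> unfolding c_def S_def v_def by (intro r_map_line_velocity) simp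
    hence "((\<lambda>s. f (c s)) has_field_derivative dirderiv f (c t) v) (at t)"
      by (rule polyfun_has_dirderiv_along_curve[OF f refl])
    thus "(\<lambda>s. f (c s)) field_differentiable at t within S"
      using field_differentiable_at_within field_differentiable_def by blast
  qed
  moreover have "c 0 = x1" "c 1 = x2"
    by (simp_all add: c_def x1_eq x2_eq w_def u_def)
  moreover have "0 \<in> S" "1 \<in> S" using y1(3) y2(3) by (simp_all add: S_def u_def)
  moreover have "open S" unfolding S_def by (rule open_nonvanishing_affine)
  ultimately show thesis using that by blast
qed

lemma polyfun_mult_vanishing_on_L_Ya:
  fixes Y :: "(complex ^ 'n::finite) set"
  assumes Y: "vec.subspace Y" and f: "f \<in> polyfun" and g: "g \<in> polyfun"
    and vanish: "\<forall>z\<in>L_Ya Y a. f z * g z = 0"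
    and x1: "x1 \<in> L_Ya Y a" and x2: "x2 \<in> L_Ya Y a"
  shows "f x1 = 0 \<or> g x2 = 0"
proof -
  obtain S c where S: "open S" "connected S" "0 \<in> S" "1 \<in> S" and c: "c 0 = x1" "c 1 = x2"
    "c ` S \<subseteq> L_Ya Y a" "\<And>f. f \<in> polyfun \<Longrightarrow> (\<lambda>t. f (c t)) holomorphic_on S"
    using L_Ya_connecting_line[OF Y x1 x2] by blast
  have "\<forall>z\<in>S. f (c z) * g (c z) = 0" using vanish c(3) by blast
  hence "f (c 0) \<noteq> 0 \<Longrightarrow> g (c 1) = 0"
    using holomorphic_mult_eq_0_imp_eq_0[OF c(4)[OF f] c(4)[OF g] S(1,2) _ S(3) _ S(4)] by blast
  thus ?thesis using c(1,2) by blast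
qed

lemma irreducible_in_U_L_Ya:
  fixes Y :: "(complex ^ 'n::finite) set"
  assumes Y: "vec.subspace Y" and "\<forall>j. \<not> annih Y \<subseteq> {p. p $ j = 0}"
  shows "irreducible_in_U (L_Ya Y a)"
  unfolding irreducible_in_U_def
proof (intro conjI allI impI)
  show "closed_in_U (L_Ya Y a)" by (rule closed_in_U_L_Ya[OF Y])
  obtain p where "p \<in> annih Y" "\<forall>j. p $ j \<noteq> 0"
    using subspace_exists_nonvanishing_coordinates[OF subspace_annih] assms(2) by blast
  hence "r_map a (0, p) \<in> L_Ya Y a"
    using vec.subspace_0[OF Y] unfolding mem_L_Ya_iff by fastforce
  thus "L_Ya Y a \<noteq> {}" by blast
next
  fix V1 V2 assume "closed_in_U V1 \<and> closed_in_U V2 \<and> L_Ya Y a = V1 \<union> V2"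
  then obtain S1 S2 where S: "S1 \<subseteq> polyfun" "S2 \<subseteq> polyfun"
    and V1: "V1 = {x \<in> torusU. \<forall>f\<in>S1. f x = 0}" and V2: "V2 = {x \<in> torusU. \<forall>f\<in>S2. f x = 0}"
    and L: "L_Ya Y a = V1 \<union> V2"
    unfolding closed_in_U_def by blast
  show "V1 = L_Ya Y a \<or> V2 = L_Ya Y a"
  proof (rule ccontr)
    assume "\<not> (V1 = L_Ya Y a \<or> V2 = L_Ya Y a)"
    then obtain x1 x2 where x1: "x1 \<in> L_Ya Y a" "x1 \<notin> V1" and x2: "x2 \<in> L_Ya Y a" "x2 \<notin> V2"
      using L by blast
    have "x1 \<in> torusU" "x2 \<in> torusU" using x1 x2 L V1 V2 by auto
    then obtain f g where f: "f \<in> S1" "f x1 \<noteq> 0" and g: "g \<in> S2" "g x2 \<noteq> 0"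
      using x1(2) x2(2) V1 V2 by blast
    have "\<forall>z\<in>L_Ya Y a. f z * g z = 0" using f(1) g(1) L V1 V2 by auto
    hence "f x1 = 0 \<or> g x2 = 0"
      using polyfun_mult_vanishing_on_L_Ya[OF Y _ _ _ x1(1) x2(1)] f(1) g(1) S by blast
    thus False using f(2) g(2) by blast
  qed
qed

theorem lemma4p1:
  fixes Y :: "(complex ^ 'n::finite) set" and a :: "complex ^ 'n" and k :: nat
  assumes "vec.subspace Y" and "vec.dim Y = k"
    and "\<forall>j. a $ j \<noteq> 0"
    and "\<forall>j. \<not> Y \<subseteq> {q. q $ j = 0}"
    and "\<forall>j. \<not> annih Y \<subseteq> {p. p $ j = 0}"
  shows "smooth_lagrangian_subvariety (L_Ya Y a)
    \<and> L_Ya Y a = {x \<in> torusU. (\<forall>\<alpha>\<in>Y. F_fun \<alpha> x = 0) \<and> (\<forall>\<beta>\<in>annih Y. G_fun a \<beta> x = 0)}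
    \<and> in_involution ({F_fun \<alpha> | \<alpha>. \<alpha> \<in> Y} \<union> {G_fun a \<beta> | \<beta>. \<beta> \<in> annih Y}) torusU"
proof -
  have tangent: "tangent_space (L_Ya Y a) x = lagrangian_tangent Y a x" if "x \<in> L_Ya Y a" for x
    using tangent_space_subset_lagrangian_tangent[OF assms(1) that]
      lagrangian_tangent_subset_tangent_space[OF assms(1) that] by blast
  have "smooth_lagrangian_subvariety (L_Ya Y a)"
    unfolding smooth_lagrangian_subvariety_def
    using irreducible_in_U_L_Ya[OF assms(1,5)] pdim_lagrangian_tangent[OF assms(1)]
      omega_lagrangian_tangent by (auto simp: tangent)
  thus ?thesis using L_Ya_eq_zero_set[OF assms(1)] in_involution_F_G by blast
qed

end
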